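(* Let $w\in K((t^\Gamma))$ have positive value, let $n\in\mathbb N$, and let $\tau=\max\{\nu(f(w))\mid f\in D_n,\ f(w)\ne0\}$. Let $\lambda\in\Gamma$ with $\lambda>\tau$, and $h\in K((t^\Gamma))$ with $\nu(h)=\lambda$. Then for every nonzero $f\in D_n$ one has $f(w+h)\ne0$.
   Context: $K$ is a field, $\Gamma$ a totally ordered abelian group, $K((t^\Gamma))$ the field of formal power series with well ordered support in $\Gamma$ and coefficients in $K$, and $\nu$ its $t$-adic valuation. $R\subset K((t^\Gamma))$ is a local ring essentially of finite type over $K$ dominated by $\nu$, $d=\dim R$, and $R=A_P$ where $A\subset R_\nu$ is a finitely generated $K$-algebra and $P$ is the center of $\nu$ on $A$. Choose $x_1,\dots,x_d\in A$ algebraically independent over $K$ and $b_1,\dots,b_r\in A$ with $A=Bb_1+\cdots+Bb_r$, $B=K[x_1,\dots,x_d]$. For an indeterminate $z$, $D_n=\{f_1b_1+\cdots+f_rb_r\mid f_j\in K[x_1,\dots,x_d,z]$ of total degree $\le n\}\subset A[z]$. $f(w)$ denotes the image of $f$ under $A[z]\to K((t^\Gamma))$, $z\mapsto w$. (The maximum defining $\tau$ exists since the set of values is finite and nonempty.) *)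

theory Defs
  imports Main
begin

text \<open>Elements of K((t^Gamma)) are represented as coefficient functions
  Gamma => K whose support is well ordered.\<close>

type_synonym ('g, 'k) hs = "'g \<Rightarrow> 'k"

definition hsupp :: "('g, 'k::zero) hs \<Rightarrow> 'g set" where
  "hsupp s = {a. s a \<noteq> 0}"

definition hahn :: "('g::linorder, 'k::zero) hs \<Rightarrow> bool" where
  "hahn s \<longleftrightarrow> wf {(a, b). a \<in> hsupp s \<and> b \<in> hsupp s \<and> a < b}"

definition hzero :: "('g, 'k::zero) hs" where
  "hzero = (\<lambda>_. 0)"

definition hconst :: "'k::zero \<Rightarrow> ('g::zero, 'k) hs" where
  "hconst c = (\<lambda>g. if g = 0 then c else 0)"

definition hone :: "('g::zero, 'k::{zero,one}) hs" where
  "hone = hconst 1"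

definition hadd :: "('g, 'k::plus) hs \<Rightarrow> ('g, 'k) hs \<Rightarrow> ('g, 'k) hs" where
  "hadd s u = (\<lambda>g. s g + u g)"

definition hneg :: "('g, 'k::uminus) hs \<Rightarrow> ('g, 'k) hs" where
  "hneg s = (\<lambda>g. - s g)"

text \<open>Cauchy product; the index set is finite for series with well ordered support.\<close>
definition hmul :: "('g::ab_group_add, 'k::comm_ring) hs \<Rightarrow> ('g, 'k) hs \<Rightarrow> ('g, 'k) hs" where
  "hmul s u = (\<lambda>g. \<Sum>a\<in>{a. s a \<noteq> 0 \<and> u (g - a) \<noteq> 0}. s a * u (g - a))"

definition hscal :: "'k::times \<Rightarrow> ('g, 'k) hs \<Rightarrow> ('g, 'k) hs" where
  "hscal c s = (\<lambda>g. c * s g)"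

definition hsum :: "('i \<Rightarrow> ('g, 'k::comm_monoid_add) hs) \<Rightarrow> 'i set \<Rightarrow> ('g, 'k) hs" where
  "hsum F I = (\<lambda>g. \<Sum>i\<in>I. F i g)"

definition hpow :: "('g::ab_group_add, 'k::comm_ring_1) hs \<Rightarrow> nat \<Rightarrow> ('g, 'k) hs" where
  "hpow s k = ((hmul s) ^^ k) hone"

definition hval :: "('g::linorder, 'k::zero) hs \<Rightarrow> 'g" where
  "hval s = (LEAST g. s g \<noteq> 0)"

definition hsubalg :: "('g::linordered_ab_group_add, 'k::field) hs set \<Rightarrow> bool" where
  "hsubalg S \<longleftrightarrow> S \<subseteq> {s. hahn s} \<and> (\<forall>c. hconst c \<in> S)
     \<and> (\<forall>a\<in>S. \<forall>b\<in>S. hadd a b \<in> S \<and> hmul a b \<in> S \<and> hneg a \<in> S)"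

definition halg_gen :: "('g::linordered_ab_group_add, 'k::field) hs set \<Rightarrow> ('g, 'k) hs set" where
  "halg_gen G = \<Inter>{S. hsubalg S \<and> G \<subseteq> S}"

definition fin_gen_alg :: "('g::linordered_ab_group_add, 'k::field) hs set \<Rightarrow> bool" where
  "fin_gen_alg A \<longleftrightarrow> hsubalg A \<and> (\<exists>G. finite G \<and> G \<subseteq> A \<and> A = halg_gen G)"

definition hideal :: "('g::linordered_ab_group_add, 'k::field) hs set \<Rightarrow> ('g, 'k) hs set \<Rightarrow> bool" where
  "hideal R I \<longleftrightarrow> hzero \<in> I \<and> I \<subseteq> R \<and> (\<forall>a\<in>I. \<forall>b\<in>I. hadd a b \<in> I)
     \<and> (\<forall>a\<in>I. \<forall>r\<in>R. hmul r a \<in> I)"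

definition hprime :: "('g::linordered_ab_group_add, 'k::field) hs set \<Rightarrow> ('g, 'k) hs set \<Rightarrow> bool" where
  "hprime R I \<longleftrightarrow> hideal R I \<and> I \<noteq> R \<and> (\<forall>a\<in>R. \<forall>b\<in>R. hmul a b \<in> I \<longrightarrow> a \<in> I \<or> b \<in> I)"

definition prime_chain :: "('g::linordered_ab_group_add, 'k::field) hs set \<Rightarrow> nat \<Rightarrow> bool" where
  "prime_chain R m \<longleftrightarrow> (\<exists>p :: nat \<Rightarrow> ('g, 'k) hs set.
      (\<forall>i\<le>m. hprime R (p i)) \<and> (\<forall>i<m. p i \<subset> p (Suc i)))"

definition krull_dim_eq :: "('g::linordered_ab_group_add, 'k::field) hs set \<Rightarrow> nat \<Rightarrow> bool" where
  "krull_dim_eq R d \<longleftrightarrow> prime_chain R d \<and> \<not> prime_chain R (Suc d)"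

definition hcenter :: "('g::linordered_ab_group_add, 'k::field) hs set \<Rightarrow> ('g, 'k) hs set" where
  "hcenter A = {a \<in> A. a = hzero \<or> hval a > 0}"

definition hlocalize :: "('g::linordered_ab_group_add, 'k::field) hs set \<Rightarrow> ('g, 'k) hs set \<Rightarrow> ('g, 'k) hs set" where
  "hlocalize A P = {q. hahn q \<and> (\<exists>a\<in>A. \<exists>s\<in>A - P. hmul s q = a)}"

text \<open>Monomials in x_0..x_(d-1): exponent vectors supported in {..<d}.\<close>
definition hprodn :: "(nat \<Rightarrow> ('g::ab_group_add, 'k::comm_ring_1) hs) \<Rightarrow> nat \<Rightarrow> ('g, 'k) hs" where
  "hprodn F m = fold (\<lambda>i acc. hmul acc (F i)) [0..<m] hone"

definition xmon :: "(nat \<Rightarrow> ('g::ab_group_add, 'k::comm_ring_1) hs) \<Rightarrow> nat \<Rightarrow> (nat \<Rightarrow> nat) \<Rightarrow> ('g, 'k) hs" where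
  "xmon x d \<alpha> = hprodn (\<lambda>i. hpow (x i) (\<alpha> i)) d"

definition exps :: "nat \<Rightarrow> (nat \<Rightarrow> nat) set" where
  "exps d = {\<alpha>. \<forall>i\<ge>d. \<alpha> i = 0}"

text \<open>Elements of B = K[x_0,...,x_(d-1)] evaluated in K((t^Gamma)).\<close>
definition Bset :: "(nat \<Rightarrow> ('g::linordered_ab_group_add, 'k::field) hs) \<Rightarrow> nat \<Rightarrow> ('g, 'k) hs set" where
  "Bset x d = {hsum (\<lambda>\<alpha>. hscal (c \<alpha>) (xmon x d \<alpha>)) F | F c. finite F \<and> F \<subseteq> exps d}"

definition alg_indep :: "(nat \<Rightarrow> ('g::linordered_ab_group_add, 'k::field) hs) \<Rightarrow> nat \<Rightarrow> bool" where
  "alg_indep x d \<longleftrightarrow> (\<forall>F c. finite F \<and> F \<subseteq> exps d \<and>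
       hsum (\<lambda>\<alpha>. hscal (c \<alpha>) (xmon x d \<alpha>)) F = hzero \<longrightarrow> (\<forall>\<alpha>\<in>F. c \<alpha> = 0))"

text \<open>Monomials x^alpha z^k of total degree <= n in K[x_0..x_(d-1), z]:
  exponent vectors alpha with alpha i = 0 for i > d, the exponent of z being alpha d.\<close>
definition mons :: "nat \<Rightarrow> nat \<Rightarrow> (nat \<Rightarrow> nat) set" where
  "mons d n = {\<alpha>. (\<forall>i>d. \<alpha> i = 0) \<and> (\<Sum>i\<le>d. \<alpha> i) \<le> n}"

text \<open>An element f = f_1 b_1 + ... + f_r b_r of D_n is given by the coefficients
  c j alpha of f_(j+1) (j < r, alpha in mons d n).  Its image f(y) under z |-> y:\<close>
definition Dn_eval :: "(nat \<Rightarrow> ('g::linordered_ab_group_add, 'k::field) hs) \<Rightarrow> nat \<Rightarrow>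
    (nat \<Rightarrow> ('g, 'k) hs) \<Rightarrow> nat \<Rightarrow> nat \<Rightarrow> (nat \<Rightarrow> (nat \<Rightarrow> nat) \<Rightarrow> 'k) \<Rightarrow> ('g, 'k) hs \<Rightarrow> ('g, 'k) hs" where
  "Dn_eval x d b r n c y = hsum (\<lambda>j. hmul
       (hsum (\<lambda>\<alpha>. hscal (c j \<alpha>) (hmul (xmon x d \<alpha>) (hpow y (\<alpha> d)))) (mons d n)) (b j)) {..<r}"

text \<open>The coefficient of z^k of f as an element of A[z].\<close>
definition Dn_zcoeff :: "(nat \<Rightarrow> ('g::linordered_ab_group_add, 'k::field) hs) \<Rightarrow> nat \<Rightarrow>
    (nat \<Rightarrow> ('g, 'k) hs) \<Rightarrow> nat \<Rightarrow> nat \<Rightarrow> (nat \<Rightarrow> (nat \<Rightarrow> nat) \<Rightarrow> 'k) \<Rightarrow> nat \<Rightarrow> ('g, 'k) hs" where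
  "Dn_zcoeff x d b r n c k = hsum (\<lambda>j. hmul
       (hsum (\<lambda>\<alpha>. hscal (c j \<alpha>) (xmon x d \<alpha>)) {\<alpha> \<in> mons d n. \<alpha> d = k}) (b j)) {..<r}"

definition Dn_nonzero :: "(nat \<Rightarrow> ('g::linordered_ab_group_add, 'k::field) hs) \<Rightarrow> nat \<Rightarrow>
    (nat \<Rightarrow> ('g, 'k) hs) \<Rightarrow> nat \<Rightarrow> nat \<Rightarrow> (nat \<Rightarrow> (nat \<Rightarrow> nat) \<Rightarrow> 'k) \<Rightarrow> bool" where
  "Dn_nonzero x d b r n c \<longleftrightarrow> (\<exists>k. Dn_zcoeff x d b r n c k \<noteq> hzero)"

end

theory Submission
  imports Defs Complex_Main
begin

(*
  Write f(w + h) by Taylor's formula as the sum over i <= n of f^[i](w) h^i, where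
  f^[i] is the i-th Hasse derivative of f with respect to z; each f^[i] is again an element of D_n.
  Since f is nonzero in A[z], its Hasse derivative of order deg_z f is its (nonzero) leading
  coefficient, so some f^[i](w) is nonzero; let k be the least such i.  Every nonzero f^[i](w)
  has value in [0, tau] (w and A lie in the valuation ring, and tau is the maximum), hence
  below lam = nu(h).  Then the term f^[k](w) h^k has value nu(f^[k](w)) + k lam, while all later
  terms have value >= (k + 1) lam, which is larger; so this coefficient of f(w + h) is nonzero.
*)

section \<open>Well ordered subsets of an ordered group\<close>

definition well_ordered :: "'a::linorder set \<Rightarrow> bool" where
  "well_ordered S \<longleftrightarrow> wf {(a, b). a \<in> S \<and> b \<in> S \<and> a < b}"

lemma well_ordered_iff_min:
  "well_ordered S \<longleftrightarrow> (\<forall>X. X \<subseteq> S \<longrightarrow> X \<noteq> {} \<longrightarrow> (\<exists>m\<in>X. \<forall>y\<in>X. m \<le> y))"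
proof
  assume wo: "well_ordered S"
  show "\<forall>X. X \<subseteq> S \<longrightarrow> X \<noteq> {} \<longrightarrow> (\<exists>m\<in>X. \<forall>y\<in>X. m \<le> y)"
  proof (intro allI impI)
    fix X assume "X \<subseteq> S" "X \<noteq> {}"
    then obtain x where "x \<in> X" by auto
    from wo[unfolded well_ordered_def wf_eq_minimal] \<open>x \<in> X\<close> obtain z where
      "z \<in> X" "\<forall>y. (y, z) \<in> {(a, b). a \<in> S \<and> b \<in> S \<and> a < b} \<longrightarrow> y \<notin> X" by blast
    then show "\<exists>m\<in>X. \<forall>y\<in>X. m \<le> y" using \<open>X \<subseteq> S\<close> by (auto simp: not_less[symmetric])
  qed
next
  assume min: "\<forall>X. X \<subseteq> S \<longrightarrow> X \<noteq> {} \<longrightarrow> (\<exists>m\<in>X. \<forall>y\<in>X. m \<le> y)"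
  show "well_ordered S" unfolding well_ordered_def wf_eq_minimal
  proof (intro allI impI)
    fix Q :: "'a set" and x assume "x \<in> Q"
    show "\<exists>z\<in>Q. \<forall>y. (y, z) \<in> {(a, b). a \<in> S \<and> b \<in> S \<and> a < b} \<longrightarrow> y \<notin> Q"
    proof (cases "Q \<inter> S = {}")
      case True then show ?thesis using \<open>x \<in> Q\<close> by auto
    next
      case False
      then obtain m where "m \<in> Q \<inter> S" "\<forall>y\<in>Q \<inter> S. m \<le> y" using min[rule_format, of "Q \<inter> S"] by auto
      then show ?thesis by (auto simp: not_less[symmetric])
    qed
  qed
qed

lemma well_ordered_minD: "well_ordered S \<Longrightarrow> X \<subseteq> S \<Longrightarrow> X \<noteq> {} \<Longrightarrow> \<exists>m\<in>X. \<forall>y\<in>X. m \<le> y"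
  unfolding well_ordered_iff_min by blast

lemma well_ordered_subset: "well_ordered S \<Longrightarrow> T \<subseteq> S \<Longrightarrow> well_ordered T"
  unfolding well_ordered_def by (erule wf_subset) auto

lemma well_ordered_Un:
  assumes S: "well_ordered S" and T: "well_ordered T"
  shows "well_ordered (S \<union> T)"
  unfolding well_ordered_iff_min
proof (intro allI impI)
  fix X assume X: "X \<subseteq> S \<union> T" "X \<noteq> {}"
  consider "X \<inter> S = {}" | "X \<inter> T = {}" | "X \<inter> S \<noteq> {}" "X \<inter> T \<noteq> {}" by blast
  then show "\<exists>m\<in>X. \<forall>y\<in>X. m \<le> y"
  proof cases
    case 1 then show ?thesis using well_ordered_minD[OF T _ X(2)] X(1) by blast
  next
    case 2 then show ?thesis using well_ordered_minD[OF S _ X(2)] X(1) by blast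
  next
    case 3
    obtain m1 where m1: "m1 \<in> X \<inter> S" "\<forall>y\<in>X \<inter> S. m1 \<le> y"
      using well_ordered_minD[OF S inf_le2 3(1)] by blast
    obtain m2 where m2: "m2 \<in> X \<inter> T" "\<forall>y\<in>X \<inter> T. m2 \<le> y"
      using well_ordered_minD[OF T inf_le2 3(2)] by blast
    have "\<forall>y\<in>X. min m1 m2 \<le> y" using m1 m2 X(1) by (auto simp: min_le_iff_disj)
    then show ?thesis using m1 m2 by (auto simp: min_def)
  qed
qed

lemma well_ordered_no_descent:
  assumes S: "well_ordered S" and f: "\<And>i. f i \<in> S"
  shows "\<exists>i. f i \<le> f (Suc i)"
proof -
  have "range f \<subseteq> S" using f by auto
  then obtain m where "m \<in> range f" "\<forall>y\<in>range f. m \<le> y"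
    using well_ordered_minD[OF S] by blast
  then show ?thesis by auto
qed

(* Every sequence in a well ordered set has a nondecreasing subsequence: take a monotone
   subsequence; if it is nonincreasing it is eventually constant. *)
lemma well_ordered_nondecreasing_subseq:
  fixes a :: "nat \<Rightarrow> 'a::linorder"
  assumes S: "well_ordered S" and a: "\<And>i. a i \<in> S"
  shows "\<exists>\<phi>. strict_mono \<phi> \<and> (\<forall>i. a (\<phi> i) \<le> a (\<phi> (Suc i)))"
proof -
  obtain f where f: "strict_mono f" "monoseq (\<lambda>i. a (f i))" using seq_monosub by blast
  show ?thesis
  proof (cases "\<forall>i. a (f i) \<le> a (f (Suc i))")
    case True then show ?thesis using f(1) by blast
  next
    case False
    then have dec: "\<forall>i j. i \<le> j \<longrightarrow> a (f j) \<le> a (f i)"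
      using f(2) unfolding monoseq_def by auto
    have "range (\<lambda>i. a (f i)) \<subseteq> S" using a by auto
    then obtain m where m: "m \<in> range (\<lambda>i. a (f i))" "\<forall>y\<in>range (\<lambda>i. a (f i)). m \<le> y"
      using well_ordered_minD[OF S] by blast
    then obtain N where N: "m = a (f N)" by auto
    have const: "a (f (N + i)) = a (f N)" for i
      using dec m(2) N by (simp add: order_antisym)
    have "strict_mono (\<lambda>i. f (N + i))" using f(1) by (simp add: strict_mono_def)
    moreover have "a (f (N + i)) \<le> a (f (N + Suc i))" for i
      unfolding const[of i] const[of "Suc i"] ..
    ultimately show ?thesis by blast
  qed
qed

lemma well_ordered_good_pair:
  fixes a :: "nat \<Rightarrow> 'a::linorder" and b :: "nat \<Rightarrow> 'b::linorder"
  assumes S: "well_ordered S" and T: "well_ordered T"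
    and ab: "\<And>i. a i \<in> S" "\<And>i. b i \<in> T"
  shows "\<exists>i j. i < j \<and> a i \<le> a j \<and> b i \<le> b j"
proof -
  obtain \<phi> where \<phi>: "strict_mono \<phi>" "\<forall>i. a (\<phi> i) \<le> a (\<phi> (Suc i))"
    using well_ordered_nondecreasing_subseq[of S a] S ab(1) by blast
  obtain i where "b (\<phi> i) \<le> b (\<phi> (Suc i))"
    using well_ordered_no_descent[OF T, of "\<lambda>i. b (\<phi> i)"] ab(2) by blast
  moreover have "\<phi> i < \<phi> (Suc i)" using \<phi>(1) by (simp add: strict_mono_def)
  ultimately show ?thesis using \<phi>(2) by blast
qed

lemma well_ordered_finite_splittings:
  fixes S T :: "'g::linordered_ab_group_add set"
  assumes S: "well_ordered S" and T: "well_ordered T"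
  shows "finite {a \<in> S. g - a \<in> T}"
proof (rule ccontr)
  assume "infinite {a \<in> S. g - a \<in> T}"
  then obtain f :: "nat \<Rightarrow> 'g" where f: "inj f" "range f \<subseteq> {a \<in> S. g - a \<in> T}"
    unfolding infinite_iff_countable_subset by blast
  then obtain i j where "i < j" "f i \<le> f j" "g - f i \<le> g - f j"
    using well_ordered_good_pair[OF S T, of f "\<lambda>i. g - f i"] by blast
  then have "f i = f j" by simp
  with \<open>i < j\<close> f(1) show False by (simp add: inj_eq)
qed

(* Neumann's lemma: the sumset of two well ordered subsets of an ordered group is well ordered;
   this makes the product of Hahn series a Hahn series. *)
lemma well_ordered_sumset:
  fixes S T :: "'g::linordered_ab_group_add set"
  assumes S: "well_ordered S" and T: "well_ordered T"
  shows "well_ordered {a + b | a b. a \<in> S \<and> b \<in> T}"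
proof (rule ccontr)
  define ST where "ST = {a + b | a b. a \<in> S \<and> b \<in> T}"
  assume "\<not> well_ordered {a + b | a b. a \<in> S \<and> b \<in> T}"
  then obtain f where f: "\<forall>i. (f (Suc i), f i) \<in> {(x, y). x \<in> ST \<and> y \<in> ST \<and> x < y}"
    unfolding well_ordered_def wf_iff_no_infinite_down_chain ST_def by blast
  have "\<forall>i. \<exists>p. fst p \<in> S \<and> snd p \<in> T \<and> f i = fst p + snd p"
    using f unfolding ST_def by force
  then obtain p where p: "\<forall>i. fst (p i) \<in> S \<and> snd (p i) \<in> T \<and> f i = fst (p i) + snd (p i)"
    by (metis choice)
  then obtain i j where "i < j" "fst (p i) \<le> fst (p j)" "snd (p i) \<le> snd (p j)"
    using well_ordered_good_pair[OF S T, of "\<lambda>i. fst (p i)" "\<lambda>i. snd (p i)"] by blast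
  then have "f i \<le> f j" using p by (metis add_mono)
  moreover have "- f i < - f j" using lift_Suc_mono_less[of "\<lambda>i. - f i"] f \<open>i < j\<close> by simp
  ultimately show False by simp
qed

section \<open>Arithmetic of Hahn series on coefficient functions\<close>

lemma hahn_iff_well_ordered: "hahn s \<longleftrightarrow> well_ordered (hsupp s)"
  by (simp add: hahn_def well_ordered_def)

lemma hahn_hzero: "hahn hzero"
  by (simp add: hahn_def hsupp_def hzero_def)

lemma hahn_hconst: "hahn (hconst c)"
proof -
  have "hsupp (hconst c) \<subseteq> {0}" by (auto simp: hsupp_def hconst_def split: if_splits)
  moreover have "well_ordered {0::'a}" by (auto simp: well_ordered_iff_min)
  ultimately show ?thesis unfolding hahn_iff_well_ordered by (rule well_ordered_subset[rotated])
qed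

lemma hahn_hone: "hahn hone"
  by (simp add: hone_def hahn_hconst)

lemma hahn_hadd:
  fixes s t :: "('g::linordered_ab_group_add, 'k::field) hs"
  assumes "hahn s" "hahn t"
  shows "hahn (hadd s t)"
proof -
  have "hsupp (hadd s t) \<subseteq> hsupp s \<union> hsupp t" by (auto simp: hsupp_def hadd_def)
  then show ?thesis using assms unfolding hahn_iff_well_ordered
    by (metis well_ordered_subset well_ordered_Un)
qed

lemma hahn_hneg:
  fixes s :: "('g::linordered_ab_group_add, 'k::field) hs"
  assumes "hahn s"
  shows "hahn (hneg s)"
  using assms by (simp add: hahn_iff_well_ordered hsupp_def hneg_def)

definition splittings :: "('g::ab_group_add, 'k::zero) hs \<Rightarrow> ('g, 'k) hs \<Rightarrow> 'g \<Rightarrow> 'g set" where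
  "splittings s t g = {a. s a \<noteq> 0 \<and> t (g - a) \<noteq> 0}"

lemma hmul_splittings: "hmul s t g = (\<Sum>a\<in>splittings s t g. s a * t (g - a))"
  by (simp add: hmul_def splittings_def)

lemma finite_splittings:
  fixes s :: "('g::linordered_ab_group_add, 'k::zero) hs"
  assumes "hahn s" "hahn t"
  shows "finite (splittings s t g)"
proof -
  have "splittings s t g = {a \<in> hsupp s. g - a \<in> hsupp t}" by (auto simp: splittings_def hsupp_def)
  then show ?thesis using assms well_ordered_finite_splittings by (simp add: hahn_iff_well_ordered)
qed

lemma hsupp_hmul:
  fixes s t :: "('g::linordered_ab_group_add, 'k::field) hs"
  shows "hsupp (hmul s t) \<subseteq> {a + b | a b. a \<in> hsupp s \<and> b \<in> hsupp t}"
proof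
  fix g assume "g \<in> hsupp (hmul s t)"
  then obtain a where "a \<in> splittings s t g" by (force simp: hsupp_def hmul_splittings)
  then have "a \<in> hsupp s" "g - a \<in> hsupp t" "g = a + (g - a)" by (auto simp: splittings_def hsupp_def)
  then show "g \<in> {a + b | a b. a \<in> hsupp s \<and> b \<in> hsupp t}" by blast
qed

lemma hahn_hmul:
  fixes s t :: "('g::linordered_ab_group_add, 'k::field) hs"
  assumes "hahn s" "hahn t"
  shows "hahn (hmul s t)"
  using assms unfolding hahn_iff_well_ordered by (rule well_ordered_subset[OF well_ordered_sumset hsupp_hmul])

lemma hmul_eq_sum:
  fixes s t :: "('g::linordered_ab_group_add, 'k::field) hs"
  assumes "finite F" "splittings s t g \<subseteq> F"
  shows "hmul s t g = (\<Sum>a\<in>F. s a * t (g - a))"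
  unfolding hmul_splittings
  by (rule sum.mono_neutral_right[symmetric, OF assms]) (auto simp: splittings_def)

lemma hmul_comm:
  fixes s t :: "('g::linordered_ab_group_add, 'k::field) hs"
  shows "hmul s t = hmul t s"
proof
  fix g
  show "hmul s t g = hmul t s g"
    unfolding hmul_splittings
    by (rule sum.reindex_bij_witness[of _ "\<lambda>a. g - a" "\<lambda>a. g - a"])
       (auto simp: splittings_def mult.commute)
qed

lemma hmul_hadd_right:
  fixes s t u :: "('g::linordered_ab_group_add, 'k::field) hs"
  assumes "hahn s" "hahn t" "hahn u"
  shows "hmul s (hadd t u) = hadd (hmul s t) (hmul s u)"
proof
  fix g
  let ?F = "splittings s t g \<union> splittings s u g"
  have fin: "finite ?F" using finite_splittings assms by blast
  have "splittings s (hadd t u) g \<subseteq> ?F" by (auto simp: splittings_def hadd_def)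
  then have "hmul s (hadd t u) g = (\<Sum>a\<in>?F. s a * (t (g - a) + u (g - a)))"
    using hmul_eq_sum[OF fin] by (simp add: hadd_def)
  also have "\<dots> = (\<Sum>a\<in>?F. s a * t (g - a)) + (\<Sum>a\<in>?F. s a * u (g - a))"
    by (simp add: distrib_left sum.distrib)
  also have "\<dots> = hmul s t g + hmul s u g"
    using hmul_eq_sum[OF fin, of s t g] hmul_eq_sum[OF fin, of s u g] by simp
  finally show "hmul s (hadd t u) g = hadd (hmul s t) (hmul s u) g" by (simp add: hadd_def)
qed

lemma hmul_hone:
  fixes s :: "('g::linordered_ab_group_add, 'k::field) hs"
  shows "hmul hone s = s"
proof
  fix g
  have "splittings hone s g \<subseteq> {0}" by (auto simp: splittings_def hone_def hconst_def split: if_splits)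
  then have "hmul hone s g = (\<Sum>a\<in>{0}. hone a * s (g - a))" by (rule hmul_eq_sum[rotated]) simp
  then show "hmul hone s g = s g" by (simp add: hone_def hconst_def)
qed

definition triples :: "('g::ab_group_add, 'k::zero) hs \<Rightarrow> ('g, 'k) hs \<Rightarrow> ('g, 'k) hs \<Rightarrow> 'g \<Rightarrow> ('g \<times> 'g) set" where
  "triples s t u g = {(a, b). s a \<noteq> 0 \<and> t b \<noteq> 0 \<and> u (g - a - b) \<noteq> 0}"

(* The coefficient at g of (s t) u is a finite sum over these pairs; associativity is then
   a reindexing of this sum. *)
lemma hmul_hmul_triples:
  fixes s t u :: "('g::linordered_ab_group_add, 'k::field) hs"
  assumes s: "hahn s" and t: "hahn t" and u: "hahn u"
  shows "finite (triples s t u g)"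
    and "hmul (hmul s t) u g = (\<Sum>(a, b)\<in>triples s t u g. s a * t b * u (g - a - b))"
proof -
  define F where "F = {c \<in> {a + b | a b. a \<in> hsupp s \<and> b \<in> hsupp t}. g - c \<in> hsupp u}"
  have finF: "finite F" unfolding F_def
    by (rule well_ordered_finite_splittings[OF well_ordered_sumset])
       (use s t u in \<open>simp_all add: hahn_iff_well_ordered\<close>)
  have "splittings (hmul s t) u g \<subseteq> F"
    using hsupp_hmul[of s t] unfolding F_def by (auto simp: splittings_def hsupp_def)
  then have "hmul (hmul s t) u g = (\<Sum>c\<in>F. hmul s t c * u (g - c))"
    by (rule hmul_eq_sum[OF finF])
  also have "\<dots> = (\<Sum>c\<in>F. \<Sum>a\<in>splittings s t c. s a * t (c - a) * u (g - c))"
    by (simp add: hmul_splittings sum_distrib_right)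
  also have "\<dots> = (\<Sum>(c, a)\<in>Sigma F (splittings s t). s a * t (c - a) * u (g - c))"
    by (rule sum.Sigma[OF finF]) (simp add: finite_splittings s t)
  finally have left: "hmul (hmul s t) u g = \<dots>" .
  define j where "j = (\<lambda>(a::'g, b). (a + b, a))"
  have inj: "inj_on j (triples s t u g)" by (auto simp: j_def inj_on_def)
  have img: "j ` triples s t u g = Sigma F (splittings s t)"
  proof
    show "j ` triples s t u g \<subseteq> Sigma F (splittings s t)"
      by (auto simp: j_def triples_def F_def splittings_def hsupp_def diff_diff_eq)
    show "Sigma F (splittings s t) \<subseteq> j ` triples s t u g"
    proof clarify
      fix c a assume "c \<in> F" "a \<in> splittings s t c"
      then have "(a, c - a) \<in> triples s t u g"
        by (auto simp: F_def splittings_def triples_def hsupp_def diff_diff_eq)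
      then show "(c, a) \<in> j ` triples s t u g" unfolding j_def by force
    qed
  qed
  show "finite (triples s t u g)"
    using finite_imageD[OF _ inj] img finF finite_splittings[OF s t] by auto
  show "hmul (hmul s t) u g = (\<Sum>(a, b)\<in>triples s t u g. s a * t b * u (g - a - b))"
    unfolding left img[symmetric] sum.reindex[OF inj] by (rule sum.cong) (auto simp: j_def diff_diff_eq)
qed

lemma hmul_assoc:
  fixes s t u :: "('g::linordered_ab_group_add, 'k::field) hs"
  assumes s: "hahn s" and t: "hahn t" and u: "hahn u"
  shows "hmul (hmul s t) u = hmul s (hmul t u)"
proof
  fix g
  have "hmul s (hmul t u) g = hmul (hmul u t) s g" by (simp add: hmul_comm)
  also have "\<dots> = (\<Sum>(a, b)\<in>triples u t s g. u a * t b * s (g - a - b))"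
    by (rule hmul_hmul_triples(2)[OF u t s])
  also have "\<dots> = (\<Sum>(a, b)\<in>triples s t u g. s a * t b * u (g - a - b))"
    by (rule sum.reindex_bij_witness[of _ "\<lambda>(a, b). (g - a - b, b)" "\<lambda>(a, b). (g - a - b, b)"])
       (auto simp: triples_def algebra_simps)
  also have "\<dots> = hmul (hmul s t) u g" by (rule hmul_hmul_triples(2)[OF s t u, symmetric])
  finally show "hmul (hmul s t) u g = hmul s (hmul t u) g" ..
qed

section \<open>The ring of Hahn series\<close>

typedef (overloaded) ('g::linordered_ab_group_add, 'k::field) hser = "{s :: ('g, 'k) hs. hahn s}"
  morphisms rep Abs_hser
  by (rule exI[of _ hzero]) (simp add: hahn_hzero)

lemma rep_hahn: "hahn (rep a)"
  using rep by simp

lemma rep_Abs: "hahn s \<Longrightarrow> rep (Abs_hser s) = s"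
  by (simp add: Abs_hser_inverse)

lemma hser_eqI: "(\<And>g. rep a g = rep b g) \<Longrightarrow> a = b"
  by (metis rep_inject ext)

(* Hahn series form a commutative ring; this lets us use the library's sums, powers and
   the binomial theorem for them. *)
instantiation hser :: (linordered_ab_group_add, field) comm_ring_1
begin

definition zero_hser_def: "0 = Abs_hser hzero"
definition one_hser_def: "1 = Abs_hser hone"
definition plus_hser_def: "a + b = Abs_hser (hadd (rep a) (rep b))"
definition uminus_hser_def: "- a = Abs_hser (hneg (rep a))"
definition minus_hser_def: "a - b = Abs_hser (hadd (rep a) (hneg (rep b)))"
definition times_hser_def: "a * b = Abs_hser (hmul (rep a) (rep b))"

lemma rep_0: "rep (0::('a, 'b) hser) = hzero"
  by (simp add: zero_hser_def rep_Abs hahn_hzero)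

lemma rep_1: "rep (1::('a, 'b) hser) = hone"
  by (simp add: one_hser_def rep_Abs hahn_hone)

lemma rep_plus: "rep (a + b) = hadd (rep a) (rep b)"
  by (simp add: plus_hser_def rep_Abs hahn_hadd rep_hahn)

lemma rep_uminus: "rep (- a) = hneg (rep a)"
  by (simp add: uminus_hser_def rep_Abs hahn_hneg rep_hahn)

lemma rep_minus: "rep (a - b) = hadd (rep a) (hneg (rep b))"
  by (simp add: minus_hser_def rep_Abs hahn_hneg hahn_hadd rep_hahn)

lemma rep_times: "rep (a * b) = hmul (rep a) (rep b)"
  by (simp add: times_hser_def rep_Abs hahn_hmul rep_hahn)

instance
proof
  fix a b c :: "('a, 'b) hser"
  show "a * b * c = a * (b * c)" by (simp add: rep_inject[symmetric] rep_times hmul_assoc rep_hahn)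
  show "a * b = b * a" by (simp add: rep_inject[symmetric] rep_times hmul_comm)
  show "1 * a = a" by (simp add: rep_inject[symmetric] rep_times rep_1 hmul_hone)
  show "a + b + c = a + (b + c)" by (rule hser_eqI) (simp add: rep_plus hadd_def add.assoc)
  show "a + b = b + a" by (rule hser_eqI) (simp add: rep_plus hadd_def add.commute)
  show "0 + a = a" by (rule hser_eqI) (simp add: rep_plus rep_0 hadd_def hzero_def)
  show "- a + a = 0" by (rule hser_eqI) (simp add: rep_plus rep_0 rep_uminus hadd_def hzero_def hneg_def)
  show "a - b = a + - b" by (rule hser_eqI) (simp add: rep_plus rep_minus rep_uminus)
  show "(a + b) * c = a * c + b * c"
    by (simp add: rep_inject[symmetric] rep_times rep_plus hmul_comm[of _ "rep c"] hmul_hadd_right rep_hahn)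
  have "rep (0::('a, 'b) hser) 0 \<noteq> rep 1 0" by (simp add: rep_0 rep_1 hzero_def hone_def hconst_def)
  then show "(0::('a, 'b) hser) \<noteq> 1" by metis
qed

end

lemma rep_sum: "rep (\<Sum>i\<in>I. F i) = hsum (\<lambda>i. rep (F i)) I"
proof (cases "finite I")
  case True then show ?thesis
    by (induction I rule: finite_induct) (simp_all add: rep_0 rep_plus hzero_def hadd_def hsum_def)
next
  case False then show ?thesis by (simp add: rep_0 hzero_def hsum_def)
qed

lemma rep_power: "rep (a ^ k) = hpow (rep a) k"
  by (induction k) (simp_all add: hpow_def rep_1 rep_times)

lemma rep_prod: "rep (\<Prod>i<m. F i) = hprodn (\<lambda>i. rep (F i)) m"
  by (induction m) (simp_all add: hprodn_def rep_1 rep_times hmul_comm)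

lemma Abs_hser_hadd: "hahn s \<Longrightarrow> hahn t \<Longrightarrow> Abs_hser (hadd s t) = Abs_hser s + Abs_hser t"
  by (simp add: rep_inject[symmetric] rep_plus rep_Abs hahn_hadd)

definition hser_const :: "'k \<Rightarrow> ('g::linordered_ab_group_add, 'k::field) hser" where
  "hser_const c = Abs_hser (hconst c)"

lemma rep_hser_const: "rep (hser_const c) = hconst c"
  by (simp add: hser_const_def rep_Abs hahn_hconst)

lemma hscal_eq_hmul: "hscal c s = hmul (hconst c) (s :: ('g::linordered_ab_group_add, 'k::field) hs)"
proof
  fix g
  have "splittings (hconst c) s g \<subseteq> {0}" by (auto simp: splittings_def hconst_def split: if_splits)
  then have "hmul (hconst c) s g = (\<Sum>a\<in>{0}. hconst c a * s (g - a))" by (rule hmul_eq_sum[rotated]) simp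
  then show "hscal c s g = hmul (hconst c) s g" by (simp add: hconst_def hscal_def)
qed

lemma hser_const_hom:
  "hser_const (a + b) = hser_const a + hser_const b" "hser_const (a * b) = hser_const a * hser_const b"
  "hser_const 0 = 0" "hser_const 1 = 1"
  by (simp_all add: rep_inject[symmetric] rep_plus rep_times rep_hser_const rep_0 rep_1 hscal_eq_hmul[symmetric])
     (simp_all add: hconst_def hadd_def hscal_def hzero_def hone_def fun_eq_iff)

lemma hser_const_of_nat: "hser_const (of_nat m) = of_nat m"
  by (induction m) (simp_all add: hser_const_hom)

section \<open>Valuation bounds and the dominant term\<close>

(* val_ge a l means nu(a) >= l: all coefficients of a below t^l vanish (true also for a = 0). *)
definition val_ge :: "('g::linordered_ab_group_add, 'k::field) hser \<Rightarrow> 'g \<Rightarrow> bool" where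
  "val_ge a l \<longleftrightarrow> (\<forall>g<l. rep a g = 0)"

lemma val_ge_1: "val_ge 1 0"
  by (simp add: val_ge_def rep_1 hone_def hconst_def)

lemma val_ge_hser_const: "val_ge (hser_const c) 0"
  by (simp add: val_ge_def rep_hser_const hconst_def)

lemma val_ge_sum: "(\<And>i. i \<in> I \<Longrightarrow> val_ge (F i) l) \<Longrightarrow> val_ge (\<Sum>i\<in>I. F i) l"
  by (simp add: val_ge_def rep_sum hsum_def)

lemma splittings_below:
  assumes "val_ge a l1" "val_ge b l2" "t \<in> splittings (rep a) (rep b) g"
  shows "l1 \<le> t" "l2 \<le> g - t"
  using assms by (auto simp: val_ge_def splittings_def not_less[symmetric])

lemma val_ge_mult:
  assumes "val_ge a l1" "val_ge b l2"
  shows "val_ge (a * b) (l1 + l2)"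
  unfolding val_ge_def rep_times hmul_splittings
proof (intro allI impI)
  fix g assume g: "g < l1 + l2"
  have "t \<notin> splittings (rep a) (rep b) g" for t
  proof
    assume "t \<in> splittings (rep a) (rep b) g"
    then have "l1 + l2 \<le> t + (g - t)" using splittings_below[OF assms] by (meson add_mono)
    with g show False by simp
  qed
  then show "(\<Sum>t\<in>splittings (rep a) (rep b) g. rep a t * rep b (g - t)) = 0"
    by (metis all_not_in_conv sum.empty)
qed

lemma coeff_mult:
  assumes "val_ge a l1" "val_ge b l2"
  shows "rep (a * b) (l1 + l2) = rep a l1 * rep b l2"
proof -
  have "t = l1" if "t \<in> splittings (rep a) (rep b) (l1 + l2)" for t
  proof -
    have "l1 \<le> t" "l2 + t \<le> l1 + l2"
      using splittings_below[OF assms that] by (simp_all add: le_diff_eq)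
    then show "t = l1" by simp
  qed
  then have "splittings (rep a) (rep b) (l1 + l2) \<subseteq> {l1}" by blast
  then have "hmul (rep a) (rep b) (l1 + l2) = (\<Sum>t\<in>{l1}. rep a t * rep b (l1 + l2 - t))"
    by (rule hmul_eq_sum[rotated]) simp
  then show ?thesis by (simp add: rep_times)
qed

lemma val_ge_power: "val_ge h l \<Longrightarrow> val_ge (h ^ i) (\<Sum>j<i. l)"
  by (induction i) (simp_all add: val_ge_1 val_ge_mult add.commute)

lemma coeff_power: "val_ge h l \<Longrightarrow> rep (h ^ i) (\<Sum>j<i. l) = rep h l ^ i"
proof (induction i)
  case 0 then show ?case by (simp add: rep_1 hone_def hconst_def)
next
  case (Suc i)
  have "rep (h ^ Suc i) (\<Sum>j<Suc i. l) = rep (h * h ^ i) (l + (\<Sum>j<i. l))"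
    by (simp add: add.commute)
  also have "\<dots> = rep h l * rep (h ^ i) (\<Sum>j<i. l)"
    by (rule coeff_mult[OF Suc.prems val_ge_power[OF Suc.prems]])
  finally show ?case using Suc by simp
qed

lemma val_ge_mult_nonneg: "val_ge a 0 \<Longrightarrow> val_ge b 0 \<Longrightarrow> val_ge (a * b) 0"
  using val_ge_mult[of a 0 b 0] by simp

lemma val_ge_prod_nonneg: "(\<And>i. i \<in> I \<Longrightarrow> val_ge (F i) 0) \<Longrightarrow> val_ge (\<Prod>i\<in>I. F i) 0"
  by (induction I rule: infinite_finite_induct) (simp_all add: val_ge_1 val_ge_mult_nonneg)

lemma val_ge_power_nonneg: "val_ge a 0 \<Longrightarrow> val_ge (a ^ k) 0"
  by (induction k) (simp_all add: val_ge_1 val_ge_mult_nonneg)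

lemma hval_least:
  assumes "hahn s" "s \<noteq> hzero"
  shows "s (hval s) \<noteq> 0" "\<And>g. g < hval s \<Longrightarrow> s g = 0"
proof -
  have "hsupp s \<noteq> {}" using assms(2) by (auto simp: hsupp_def hzero_def)
  then obtain m where m: "m \<in> hsupp s" "\<forall>y\<in>hsupp s. m \<le> y"
    using well_ordered_minD[of "hsupp s" "hsupp s"] assms(1) by (auto simp: hahn_iff_well_ordered)
  have "hval s = m" unfolding hval_def
    by (rule Least_equality) (use m in \<open>auto simp: hsupp_def\<close>)
  then show "s (hval s) \<noteq> 0" "\<And>g. g < hval s \<Longrightarrow> s g = 0"
    using m by (auto simp: hsupp_def not_le[symmetric])
qed

lemma val_ge_Abs:
  assumes "hahn s" "s = hzero \<or> l \<le> hval s"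
  shows "val_ge (Abs_hser s) l"
proof (cases "s = hzero")
  case True then show ?thesis unfolding val_ge_def rep_Abs[OF assms(1)] by (simp add: hzero_def)
next
  case False
  then show ?thesis using assms hval_least(2)[OF assms(1) False]
    unfolding val_ge_def rep_Abs[OF assms(1)] by (meson order_less_le_trans)
qed

lemma val_ge_hval:
  assumes "a \<noteq> 0"
  shows "val_ge a (hval (rep a))" "rep a (hval (rep a)) \<noteq> 0"
proof -
  have "rep a \<noteq> hzero" using assms by (simp add: rep_inject[symmetric] rep_0)
  then show "val_ge a (hval (rep a))" "rep a (hval (rep a)) \<noteq> 0"
    using hval_least[OF rep_hahn] by (auto simp: val_ge_def)
qed

(* The dominant term argument: in a sum of terms D i * H^i, where each D i is zero or has value
   in [0, lam) and H has value exactly lam, the first nonzero term D k * H^k alone contributes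
   to the coefficient at nu(D k) + k lam, which therefore does not vanish. *)
lemma dominant_term:
  fixes D :: "nat \<Rightarrow> ('g::linordered_ab_group_add, 'k::field) hser"
  assumes D_nonneg: "\<And>i. i \<le> n \<Longrightarrow> val_ge (D i) 0"
    and D_small: "\<And>i. i \<le> n \<Longrightarrow> D i \<noteq> 0 \<Longrightarrow> hval (rep (D i)) < lam"
    and D_nonzero: "i0 \<le> n" "D i0 \<noteq> 0"
    and H: "val_ge H lam" "rep H lam \<noteq> 0"
  shows "(\<Sum>i\<le>n. D i * H ^ i) \<noteq> 0"
proof -
  define k where "k = (LEAST i. D i \<noteq> 0)"
  have Dk: "D k \<noteq> 0" unfolding k_def by (rule LeastI[of _ i0]) (rule D_nonzero(2))
  have below: "D i = 0" if "i < k" for i using that not_less_Least unfolding k_def by blast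
  have kn: "k \<le> n" using Least_le[of "\<lambda>i. D i \<noteq> 0" i0] D_nonzero unfolding k_def by simp
  define v where "v = hval (rep (D k))"
  have vDk: "val_ge (D k) v" and cDk: "rep (D k) v \<noteq> 0" unfolding v_def using val_ge_hval[OF Dk] by auto
  have "0 \<le> v" using D_nonneg[OF kn] cDk unfolding val_ge_def by (meson not_le)
  moreover have "v < lam" using D_small[OF kn Dk] by (simp add: v_def)
  ultimately have lam: "0 \<le> lam" by simp
  define g0 where "g0 = v + (\<Sum>j<k. lam)"
  have single_term: "rep (D i * H ^ i) g0 = (if i = k then rep (D k) v * rep H lam ^ k else 0)"
    if "i \<le> n" for i
  proof (cases rule: linorder_cases[of i k])
    case less then show ?thesis using below by (simp add: rep_0 hzero_def)
  next
    case equal then show ?thesis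
      using coeff_mult[OF vDk val_ge_power[OF H(1)]] coeff_power[OF H(1)] by (simp add: g0_def)
  next
    case greater
    have "g0 < (\<Sum>j<Suc k. lam)" using \<open>v < lam\<close> by (simp add: g0_def)
    also have "\<dots> \<le> (\<Sum>j<i. lam)"
      by (rule sum_mono2) (use greater lam in auto)
    finally have "g0 < 0 + (\<Sum>j<i. lam)" by (simp only: add_0)
    then show ?thesis
      using val_ge_mult[OF D_nonneg[OF that] val_ge_power[OF H(1)]] greater by (simp add: val_ge_def)
  qed
  have "rep (\<Sum>i\<le>n. D i * H ^ i) g0 = (\<Sum>i\<le>n. rep (D i * H ^ i) g0)"
    by (simp add: rep_sum hsum_def)
  also have "\<dots> = (\<Sum>i\<le>n. if i = k then rep (D k) v * rep H lam ^ k else 0)"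
    by (rule sum.cong) (simp_all add: single_term)
  also have "\<dots> = rep (D k) v * rep H lam ^ k" using kn by simp
  finally have "rep (\<Sum>i\<le>n. D i * H ^ i) g0 \<noteq> 0" using cDk H(2) by simp
  then show ?thesis by (auto simp: rep_0 hzero_def)
qed

section \<open>Taylor expansion of elements of D_n\<close>

(* Taylor expansion of a polynomial of degree at most n over a commutative ring:
   f(w + h) = sum over i of (Hasse derivative f^[i])(w) h^i. *)
lemma taylor_expansion:
  fixes Z :: "nat \<Rightarrow> 'a::comm_ring_1"
  assumes Z0: "\<And>m. n < m \<Longrightarrow> Z m = 0"
  shows "(\<Sum>m\<le>n. Z m * (w + h) ^ m) =
         (\<Sum>i\<le>n. (\<Sum>k\<le>n. of_nat ((k + i) choose i) * Z (k + i) * w ^ k) * h ^ i)"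
proof -
  define f where "f i m = of_nat (m choose i) * Z m * w ^ (m - i)" for i m
  have binomial: "Z m * (w + h) ^ m = (\<Sum>i\<le>n. f i m * h ^ i)" if "m \<le> n" for m
  proof -
    have "(h + w) ^ m = (\<Sum>i\<le>m. of_nat (m choose i) * h ^ i * w ^ (m - i))" by (rule binomial_ring)
    also have "\<dots> = (\<Sum>i\<le>n. of_nat (m choose i) * h ^ i * w ^ (m - i))"
      by (rule sum.mono_neutral_left) (use that in \<open>auto simp: binomial_eq_0\<close>)
    finally show ?thesis unfolding f_def by (simp add: add.commute sum_distrib_left mult_ac)
  qed
  have reindex: "(\<Sum>m\<le>n. f i m) = (\<Sum>k\<le>n. of_nat ((k + i) choose i) * Z (k + i) * w ^ k)" for i
  proof -
    have "(\<Sum>k\<le>n. of_nat ((k + i) choose i) * Z (k + i) * w ^ k) = (\<Sum>k\<in>{0..n}. f i (k + i))"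
      unfolding f_def by (simp add: atMost_atLeast0)
    also have "\<dots> = (\<Sum>m\<in>{0 + i..n + i}. f i m)" by (rule sum.shift_bounds_cl_nat_ivl[symmetric])
    also have "\<dots> = (\<Sum>m\<le>n + i. f i m)"
      by (rule sum.mono_neutral_left) (auto simp: f_def binomial_eq_0 not_le)
    also have "\<dots> = (\<Sum>m\<le>n. f i m)"
      by (rule sum.mono_neutral_right) (auto simp: f_def Z0)
    finally show ?thesis by simp
  qed
  have "(\<Sum>m\<le>n. Z m * (w + h) ^ m) = (\<Sum>m\<le>n. \<Sum>i\<le>n. f i m * h ^ i)"
    by (rule sum.cong) (simp_all add: binomial)
  also have "\<dots> = (\<Sum>i\<le>n. (\<Sum>m\<le>n. f i m) * h ^ i)"
    by (subst sum.swap) (simp add: sum_distrib_right)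
  finally show ?thesis by (simp add: reindex)
qed

lemma mons_le: "\<alpha> \<in> mons d n \<Longrightarrow> i \<le> d \<Longrightarrow> \<alpha> i \<le> n"
proof -
  assume a: "\<alpha> \<in> mons d n" "i \<le> d"
  have "\<alpha> i \<le> (\<Sum>i\<le>d. \<alpha> i)" by (rule member_le_sum) (use a in auto)
  then show ?thesis using a by (auto simp: mons_def)
qed

lemma finite_mons: "finite (mons d n)"
proof (rule finite_subset)
  show "mons d n \<subseteq> {\<alpha>. \<forall>i. (i \<in> {..d} \<longrightarrow> \<alpha> i \<in> {..n}) \<and> (i \<notin> {..d} \<longrightarrow> \<alpha> i = 0)}"
    by (auto simp: mons_le) (auto simp: mons_def)
qed (rule finite_set_of_finite_funs; simp)

lemma mons_slice_shift:
  "bij_betw (\<lambda>\<alpha>. \<alpha>(d := k + i)) {\<alpha> \<in> mons d n. \<alpha> d = k \<and> \<alpha>(d := k + i) \<in> mons d n}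
     {\<beta> \<in> mons d n. \<beta> d = k + i}"
proof (rule bij_betw_byWitness[of _ "\<lambda>\<beta>. \<beta>(d := k)"])
  show "(\<lambda>\<beta>. \<beta>(d := k)) ` {\<beta> \<in> mons d n. \<beta> d = k + i}
      \<subseteq> {\<alpha> \<in> mons d n. \<alpha> d = k \<and> \<alpha>(d := k + i) \<in> mons d n}"
  proof clarify
    fix \<beta> assume \<beta>: "\<beta> \<in> mons d n" "\<beta> d = k + i"
    have "(\<Sum>l\<le>d. (\<beta>(d := k)) l) \<le> (\<Sum>l\<le>d. \<beta> l)" by (rule sum_mono) (use \<beta> in auto)
    then have "\<beta>(d := k) \<in> mons d n" using \<beta> by (auto simp: mons_def)
    moreover have "\<beta>(d := k, d := k + i) = \<beta>" using \<beta> by auto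
    ultimately show "\<beta>(d := k) \<in> mons d n \<and> (\<beta>(d := k)) d = k \<and> \<beta>(d := k, d := k + i) \<in> mons d n"
      using \<beta> by simp
  qed
qed auto

definition xmono :: "(nat \<Rightarrow> ('g::linordered_ab_group_add, 'k::field) hser) \<Rightarrow> nat \<Rightarrow> (nat \<Rightarrow> nat) \<Rightarrow> ('g, 'k) hser" where
  "xmono xs d \<alpha> = (\<Prod>i<d. xs i ^ \<alpha> i)"

definition evalD :: "(nat \<Rightarrow> ('g::linordered_ab_group_add, 'k::field) hser) \<Rightarrow> nat \<Rightarrow> (nat \<Rightarrow> ('g, 'k) hser)
    \<Rightarrow> nat \<Rightarrow> nat \<Rightarrow> (nat \<Rightarrow> (nat \<Rightarrow> nat) \<Rightarrow> 'k) \<Rightarrow> ('g, 'k) hser \<Rightarrow> ('g, 'k) hser" where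
  "evalD xs d bs r n c y = (\<Sum>j<r. (\<Sum>\<alpha>\<in>mons d n. hser_const (c j \<alpha>) * (xmono xs d \<alpha> * y ^ \<alpha> d)) * bs j)"

definition zcoeff :: "(nat \<Rightarrow> ('g::linordered_ab_group_add, 'k::field) hser) \<Rightarrow> nat \<Rightarrow> (nat \<Rightarrow> ('g, 'k) hser)
    \<Rightarrow> nat \<Rightarrow> nat \<Rightarrow> (nat \<Rightarrow> (nat \<Rightarrow> nat) \<Rightarrow> 'k) \<Rightarrow> nat \<Rightarrow> ('g, 'k) hser" where
  "zcoeff xs d bs r n c k = (\<Sum>j<r. (\<Sum>\<alpha>\<in>{\<alpha> \<in> mons d n. \<alpha> d = k}. hser_const (c j \<alpha>) * xmono xs d \<alpha>) * bs j)"

(* Coefficients of the i-th Hasse derivative (1/i!) d^i f / dz^i of f; it is again in D_n. *)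
definition hasse :: "nat \<Rightarrow> nat \<Rightarrow> nat \<Rightarrow> (nat \<Rightarrow> (nat \<Rightarrow> nat) \<Rightarrow> 'k::field) \<Rightarrow> nat \<Rightarrow> (nat \<Rightarrow> nat) \<Rightarrow> 'k" where
  "hasse d n i c j \<alpha> = (if \<alpha>(d := \<alpha> d + i) \<in> mons d n
      then of_nat ((\<alpha> d + i) choose i) * c j (\<alpha>(d := \<alpha> d + i)) else 0)"

lemma xmono_upd: "xmono xs d (\<alpha>(d := v)) = xmono xs d \<alpha>"
  unfolding xmono_def by (rule prod.cong) auto

lemma evalD_zcoeff: "evalD xs d bs r n c y = (\<Sum>k\<le>n. zcoeff xs d bs r n c k * y ^ k)"
proof -
  have slices: "(\<Sum>\<alpha>\<in>mons d n. hser_const (c j \<alpha>) * (xmono xs d \<alpha> * y ^ \<alpha> d)) =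
      (\<Sum>k\<le>n. (\<Sum>\<alpha>\<in>{\<alpha> \<in> mons d n. \<alpha> d = k}. hser_const (c j \<alpha>) * xmono xs d \<alpha>) * y ^ k)" for j
  proof -
    have "(\<Sum>\<alpha>\<in>mons d n. hser_const (c j \<alpha>) * (xmono xs d \<alpha> * y ^ \<alpha> d)) =
        (\<Sum>k\<le>n. \<Sum>\<alpha>\<in>{\<alpha>. \<alpha> \<in> mons d n \<and> \<alpha> d = k}. hser_const (c j \<alpha>) * (xmono xs d \<alpha> * y ^ \<alpha> d))"
      by (rule sum.group[symmetric]) (auto simp: finite_mons mons_le)
    then show ?thesis by (auto simp: sum_distrib_right mult.assoc intro!: sum.cong)
  qed
  have "evalD xs d bs r n c y =
      (\<Sum>j<r. \<Sum>k\<le>n. (\<Sum>\<alpha>\<in>{\<alpha> \<in> mons d n. \<alpha> d = k}. hser_const (c j \<alpha>) * xmono xs d \<alpha>) * bs j * y ^ k)"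
    unfolding evalD_def slices sum_distrib_right by (simp only: mult_ac)
  also have "\<dots> = (\<Sum>k\<le>n. zcoeff xs d bs r n c k * y ^ k)"
    by (subst sum.swap) (simp add: zcoeff_def sum_distrib_right)
  finally show ?thesis .
qed

lemma zcoeff_above: "n < k \<Longrightarrow> zcoeff xs d bs r n c k = 0"
proof -
  assume "n < k"
  then have empty: "{\<alpha> \<in> mons d n. \<alpha> d = k} = {}" using mons_le[of _ d n d] by fastforce
  show ?thesis unfolding zcoeff_def empty by simp
qed

lemma zcoeff_hasse:
  "zcoeff xs d bs r n (hasse d n i c) k = of_nat ((k + i) choose i) * zcoeff xs d bs r n c (k + i)"
proof -
  define S where "S = {\<alpha> \<in> mons d n. \<alpha> d = k \<and> \<alpha>(d := k + i) \<in> mons d n}"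
  have slice: "(\<Sum>\<alpha>\<in>{\<alpha> \<in> mons d n. \<alpha> d = k}. hser_const (hasse d n i c j \<alpha>) * xmono xs d \<alpha>) =
     of_nat ((k + i) choose i) * (\<Sum>\<beta>\<in>{\<beta> \<in> mons d n. \<beta> d = k + i}. hser_const (c j \<beta>) * xmono xs d \<beta>)" for j
  proof -
    have "(\<Sum>\<alpha>\<in>{\<alpha> \<in> mons d n. \<alpha> d = k}. hser_const (hasse d n i c j \<alpha>) * xmono xs d \<alpha>) =
       (\<Sum>\<alpha>\<in>S. hser_const (hasse d n i c j \<alpha>) * xmono xs d \<alpha>)"
      by (rule sum.mono_neutral_right) (auto simp: S_def hasse_def hser_const_hom finite_mons)
    also have "\<dots> = (\<Sum>\<alpha>\<in>S. of_nat ((k + i) choose i) * (hser_const (c j (\<alpha>(d := k + i))) * xmono xs d (\<alpha>(d := k + i))))"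
      by (rule sum.cong) (simp_all add: S_def hasse_def hser_const_hom hser_const_of_nat xmono_upd mult.assoc)
    also have "\<dots> = of_nat ((k + i) choose i) * (\<Sum>\<alpha>\<in>S. hser_const (c j (\<alpha>(d := k + i))) * xmono xs d (\<alpha>(d := k + i)))"
      by (simp only: sum_distrib_left)
    also have "(\<Sum>\<alpha>\<in>S. hser_const (c j (\<alpha>(d := k + i))) * xmono xs d (\<alpha>(d := k + i))) =
        (\<Sum>\<beta>\<in>{\<beta> \<in> mons d n. \<beta> d = k + i}. hser_const (c j \<beta>) * xmono xs d \<beta>)"
      unfolding S_def by (rule sum.reindex_bij_betw[OF mons_slice_shift])
    finally show ?thesis .
  qed
  have "zcoeff xs d bs r n (hasse d n i c) k = (\<Sum>j<r. of_nat ((k + i) choose i) *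
      ((\<Sum>\<beta>\<in>{\<beta> \<in> mons d n. \<beta> d = k + i}. hser_const (c j \<beta>) * xmono xs d \<beta>) * bs j))"
    unfolding zcoeff_def slice by (simp only: mult.assoc)
  then show ?thesis unfolding zcoeff_def by (simp only: sum_distrib_left)
qed

lemma evalD_taylor:
  "evalD xs d bs r n c (w + h) = (\<Sum>i\<le>n. evalD xs d bs r n (hasse d n i c) w * h ^ i)"
  unfolding evalD_zcoeff[of xs d bs r n c] evalD_zcoeff[of xs d bs r n "hasse d n _ c"] zcoeff_hasse
  by (rule taylor_expansion) (simp add: zcoeff_above)

(* If f is nonzero in A[z], its Hasse derivative of order deg_z f is its leading z-coefficient,
   a nonzero element of A; so some Hasse derivative of f does not vanish at w. *)
lemma hasse_nonvanishing:
  assumes "zcoeff xs d bs r n c k0 \<noteq> 0"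
  shows "\<exists>i\<le>n. evalD xs d bs r n (hasse d n i c) w \<noteq> 0"
proof -
  define KS where "KS = {k. k \<le> n \<and> zcoeff xs d bs r n c k \<noteq> 0}"
  define K where "K = Max KS"
  have fin: "finite KS" unfolding KS_def by simp
  have "k0 \<in> KS" using assms zcoeff_above not_le unfolding KS_def by blast
  then have "K \<in> KS" unfolding K_def using Max_in[OF fin] by blast
  then have K: "K \<le> n" "zcoeff xs d bs r n c K \<noteq> 0" unfolding KS_def by auto
  have above_K: "zcoeff xs d bs r n c k = 0" if "K < k" for k
  proof (rule ccontr)
    assume "zcoeff xs d bs r n c k \<noteq> 0"
    then have "k \<in> KS" using zcoeff_above not_le unfolding KS_def by blast
    then show False using Max_ge[OF fin] that unfolding K_def by fastforce
  qed
  have "evalD xs d bs r n (hasse d n K c) w =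
      (\<Sum>k\<le>n. zcoeff xs d bs r n (hasse d n K c) k * w ^ k)" by (rule evalD_zcoeff)
  also have "\<dots> = (\<Sum>k\<in>{0}. of_nat ((k + K) choose K) * zcoeff xs d bs r n c (k + K) * w ^ k)"
    unfolding zcoeff_hasse by (rule sum.mono_neutral_right) (auto simp: above_K)
  finally show ?thesis using K by auto
qed

lemma evalD_nonneg:
  assumes "\<And>i. i < d \<Longrightarrow> val_ge (xs i) 0" "\<And>j. j < r \<Longrightarrow> val_ge (bs j) 0" "val_ge y 0"
  shows "val_ge (evalD xs d bs r n c y) 0"
proof -
  have "val_ge (xmono xs d \<alpha>) 0" for \<alpha>
    unfolding xmono_def using assms(1) by (intro val_ge_prod_nonneg val_ge_power_nonneg) simp
  then show ?thesis unfolding evalD_def using assms(2,3)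
    by (intro val_ge_sum val_ge_mult_nonneg val_ge_hser_const val_ge_power_nonneg) simp_all
qed

lemma hprodn_cong: "(\<And>i. i < m \<Longrightarrow> F i = G i) \<Longrightarrow> hprodn F m = hprodn G m"
  unfolding hprodn_def by (rule List.fold_cong) auto

lemma hsum_cong: "(\<And>i. i \<in> I \<Longrightarrow> F i = G i) \<Longrightarrow> hsum F I = hsum G I"
  unfolding hsum_def by (auto intro!: ext sum.cong)

lemma fin_gen_alg_hahn: "fin_gen_alg A \<Longrightarrow> a \<in> A \<Longrightarrow> hahn a"
  by (auto simp: fin_gen_alg_def hsubalg_def)

lemma rep_xmono:
  assumes "\<And>i. i < d \<Longrightarrow> hahn (x i)"
  shows "rep (xmono (\<lambda>i. Abs_hser (x i)) d \<alpha>) = xmon x d \<alpha>"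
  unfolding xmono_def rep_prod rep_power xmon_def by (rule hprodn_cong) (simp add: rep_Abs assms)

lemma Dn_eval_rep:
  assumes x: "\<And>i. i < d \<Longrightarrow> hahn (x i)" and b: "\<And>j. j < r \<Longrightarrow> hahn (b j)" and y: "hahn y"
  shows "Dn_eval x d b r n c y = rep (evalD (\<lambda>i. Abs_hser (x i)) d (\<lambda>j. Abs_hser (b j)) r n c (Abs_hser y))"
  unfolding Dn_eval_def evalD_def
  by (simp add: rep_sum rep_times rep_power rep_Abs y rep_hser_const hscal_eq_hmul rep_xmono x)
     (rule hsum_cong, simp add: rep_Abs b)

lemma Dn_zcoeff_rep:
  assumes x: "\<And>i. i < d \<Longrightarrow> hahn (x i)" and b: "\<And>j. j < r \<Longrightarrow> hahn (b j)"
  shows "Dn_zcoeff x d b r n c k = rep (zcoeff (\<lambda>i. Abs_hser (x i)) d (\<lambda>j. Abs_hser (b j)) r n c k)"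
  unfolding Dn_zcoeff_def zcoeff_def
  by (simp add: rep_sum rep_times rep_hser_const hscal_eq_hmul rep_xmono x)
     (rule hsum_cong, simp add: rep_Abs b)

lemma Dn_nonzero_rep:
  assumes x: "\<And>i. i < d \<Longrightarrow> hahn (x i)" and b: "\<And>j. j < r \<Longrightarrow> hahn (b j)"
    and "Dn_nonzero x d b r n c"
  shows "\<exists>k. zcoeff (\<lambda>i. Abs_hser (x i)) d (\<lambda>j. Abs_hser (b j)) r n c k \<noteq> 0"
proof -
  obtain k where "Dn_zcoeff x d b r n c k \<noteq> hzero" using assms(3) unfolding Dn_nonzero_def by blast
  then show ?thesis using Dn_zcoeff_rep[where c=c and k=k, OF x b] by (auto simp: rep_0)
qed

theorem mainTheorem9:
  fixes A R :: "('g::linordered_ab_group_add, 'k::field) hs set"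
    and x b :: "nat \<Rightarrow> ('g, 'k) hs"
    and d r n :: nat
    and w h :: "('g, 'k) hs"
    and \<tau> lam :: 'g
  assumes A_fg: "fin_gen_alg A"
    and A_Rnu: "\<forall>a\<in>A. a = hzero \<or> hval a \<ge> 0"
    and R_def: "R = hlocalize A (hcenter A)"
    and dimR: "krull_dim_eq R d"
    and x_in: "\<forall>i<d. x i \<in> A"
    and x_indep: "alg_indep x d"
    and b_in: "\<forall>j<r. b j \<in> A"
    and A_eq: "A = {hsum (\<lambda>j. hmul (\<beta> j) (b j)) {..<r} | \<beta>. \<forall>j<r. \<beta> j \<in> Bset x d}"
    and w_hahn: "hahn w"
    and w_pos: "w = hzero \<or> hval w > 0"
    and tau_in: "\<tau> \<in> {hval (Dn_eval x d b r n c w) | c. Dn_eval x d b r n c w \<noteq> hzero}"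
    and tau_max: "\<forall>c. Dn_eval x d b r n c w \<noteq> hzero \<longrightarrow> hval (Dn_eval x d b r n c w) \<le> \<tau>"
    and lam: "lam > \<tau>"
    and h_hahn: "hahn h"
    and h_nz: "h \<noteq> hzero"
    and h_val: "hval h = lam"
  shows "\<forall>c. Dn_nonzero x d b r n c \<longrightarrow> Dn_eval x d b r n c (hadd w h) \<noteq> hzero"
proof (intro allI impI)
  fix c assume "Dn_nonzero x d b r n c"
  have x_hahn: "\<And>i. i < d \<Longrightarrow> hahn (x i)" and b_hahn: "\<And>j. j < r \<Longrightarrow> hahn (b j)"
    using fin_gen_alg_hahn[OF A_fg] x_in b_in by auto
  define X B W H where "X i = Abs_hser (x i)" and "B j = Abs_hser (b j)" and "W = Abs_hser w"
    and "H = Abs_hser h" for i j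
  have eval_rep: "Dn_eval x d b r n c' y = rep (evalD X d B r n c' (Abs_hser y))" if "hahn y" for c' y
    unfolding X_def B_def by (rule Dn_eval_rep[OF x_hahn b_hahn that])
  \<comment> \<open>the values at w of elements of D_n, in particular of the Hasse derivatives of f, are
    zero or have value in [0, lam), since x, b and w lie in the valuation ring\<close>
  have W_nonneg: "val_ge W 0" using val_ge_Abs[OF w_hahn] w_pos less_imp_le unfolding W_def by blast
  have A_nonneg: "val_ge (Abs_hser a) 0" if "a \<in> A" for a
    using val_ge_Abs fin_gen_alg_hahn[OF A_fg that] A_Rnu that by blast
  have D_nonneg: "val_ge (evalD X d B r n c' W) 0" for c'
    using A_nonneg x_in b_in W_nonneg by (intro evalD_nonneg) (auto simp: X_def B_def)
  have D_small: "hval (rep (evalD X d B r n c' W)) < lam" if "evalD X d B r n c' W \<noteq> 0" for c'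
    using tau_max[rule_format, of c'] lam that eval_rep[OF w_hahn, of c']
    by (auto simp: W_def rep_0[symmetric] rep_inject intro: order_le_less_trans)
  obtain i0 where i0: "i0 \<le> n" "evalD X d B r n (hasse d n i0 c) W \<noteq> 0"
    using Dn_nonzero_rep[OF x_hahn b_hahn \<open>Dn_nonzero x d b r n c\<close>] hasse_nonvanishing
    unfolding X_def B_def by blast
  have H: "val_ge H lam" "rep H lam \<noteq> 0"
    using val_ge_Abs[OF h_hahn, of lam] hval_least(1)[OF h_hahn h_nz] h_val
    unfolding H_def rep_Abs[OF h_hahn] by simp_all
  have "evalD X d B r n c (W + H) \<noteq> 0" unfolding evalD_taylor
    by (rule dominant_term[where D="\<lambda>i. evalD X d B r n (hasse d n i c) W", OF D_nonneg D_small i0 H])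
  then show "Dn_eval x d b r n c (hadd w h) \<noteq> hzero"
    using eval_rep[OF hahn_hadd[OF w_hahn h_hahn], of c] Abs_hser_hadd[OF w_hahn h_hahn]
    by (simp add: W_def H_def rep_0[symmetric] rep_inject)
qed

end
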